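(* Let $p:\mathbb R^{n\times k}\to\mathbb R$ be a polynomial invariant under all permutations of the last $n-1$ rows of $\mathbf X=(\mathbf x_1,\dots,\mathbf x_n)^T$. Then $$p(\mathbf X)=\sum_{\alpha\in\mathbb N^k,\ |\alpha|\le n}\mathbf x_1^\alpha\,q_\alpha(\mathbf X),$$ where each $q_\alpha:\mathbb R^{n\times k}\to\mathbb R$ is a polynomial invariant under all permutations of the rows of $\mathbf X$ (i.e. $S_n$-invariant).
   Context: For $\mathbf x\in\mathbb R^k$ and $\alpha\in\mathbb N^k$, $\mathbf x^\alpha=x_1^{\alpha_1}\cdots x_k^{\alpha_k}$ and $|\alpha|=\sum_i\alpha_i$. $S_n$ acts on $\mathbf X\in\mathbb R^{n\times k}$ by permuting rows. *)

theory Defs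
  imports Complex_Main "HOL-Combinatorics.Permutations"
begin

text \<open>Matrices X in R^(n x k) are modelled as functions nat => nat => real;
  row i (0-based, i < n), column j (j < k). Row 0 is x_1.\<close>

definition monomial_mat :: "nat \<Rightarrow> nat \<Rightarrow> (nat \<Rightarrow> nat \<Rightarrow> nat) \<Rightarrow> (nat \<Rightarrow> nat \<Rightarrow> real) \<Rightarrow> real" where
  "monomial_mat n k A X = (\<Prod>i<n. \<Prod>j<k. X i j ^ A i j)"

definition poly_fun :: "nat \<Rightarrow> nat \<Rightarrow> ((nat \<Rightarrow> nat \<Rightarrow> real) \<Rightarrow> real) \<Rightarrow> bool" where
  "poly_fun n k p \<longleftrightarrow> (\<exists>S c. finite S \<and> (\<forall>X. p X = (\<Sum>A\<in>S. c A * monomial_mat n k A X)))"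

definition permute_rows :: "(nat \<Rightarrow> nat) \<Rightarrow> (nat \<Rightarrow> nat \<Rightarrow> real) \<Rightarrow> (nat \<Rightarrow> nat \<Rightarrow> real)" where
  "permute_rows \<sigma> X = (\<lambda>i j. X (\<sigma> i) j)"

definition row_perm_invariant :: "nat set \<Rightarrow> ((nat \<Rightarrow> nat \<Rightarrow> real) \<Rightarrow> real) \<Rightarrow> bool" where
  "row_perm_invariant R p \<longleftrightarrow> (\<forall>\<sigma> X. \<sigma> permutes R \<longrightarrow> p (permute_rows \<sigma> X) = p X)"

end

theory Submission
  imports Defs
begin

text \<open>Let A(D) be the algebra generated by the S_n-invariant polynomials and the
  entries of the rows in D; every polynomial lies in A({..<n}). Suppose f in A(D + {d}) is
  invariant under the transpositions (d u) for all rows u in the complement U of D. Writing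
  f = sum_beta x_d^beta g_beta with g_beta in A(D) and averaging over these transpositions gives
  f = |U|^-1 sum_beta g_beta (sum_{u in U} x_u^beta), and this partial power sum is a full power
  sum minus monomials in the rows of D, so f is in A(D). Removing the rows n - 1, ..., 1 in turn
  (all but row 0, which is x_1) leaves p = sum_beta x_1^beta g_beta with symmetric g_beta.

  It remains to bring the degree in x_1 down to at most n. For colours c_1, ..., c_n < k the sum
  over tau in S_n of prod_t (x_{1,c_t} - x_{tau(t),c_t}) vanishes, because every tau maps some t
  to the first row. Expanding the products writes n! x_{1,c_1} ... x_{1,c_n} as a combination,
  with S_n-invariant coefficients, of products of fewer entries of the first row; induction on
  the degree finishes the proof.\<close>

section \<open>Polynomial functions and their symmetrizations\<close>

lemma poly_funI:
  assumes "finite I" "\<And>X. f X = (\<Sum>i\<in>I. c i * monomial_mat n k (A i) X)"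
  shows "poly_fun n k f"
proof -
  have "f X = (\<Sum>B\<in>A ` I. (\<Sum>i\<in>{i\<in>I. A i = B}. c i) * monomial_mat n k B X)" for X
  proof -
    have "f X = (\<Sum>B\<in>A ` I. \<Sum>i\<in>{i\<in>I. A i = B}. c i * monomial_mat n k (A i) X)"
      unfolding assms(2) using assms(1) by (intro sum.group[symmetric]) auto
    also have "\<dots> = (\<Sum>B\<in>A ` I. (\<Sum>i\<in>{i\<in>I. A i = B}. c i) * monomial_mat n k B X)"
      by (auto simp: sum_distrib_right intro!: sum.cong)
    finally show ?thesis .
  qed
  then show ?thesis
    unfolding poly_fun_def using finite_imageI[OF assms(1)]
    by (intro exI[of _ "A ` I"] exI[of _ "\<lambda>B. \<Sum>i\<in>{i\<in>I. A i = B}. c i"]) auto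
qed

lemma poly_fun_const: "poly_fun n k (\<lambda>X. a)"
  by (rule poly_funI[of "{()}" _ "\<lambda>_. a" _ _ "\<lambda>_ _ _. 0"]) (simp_all add: monomial_mat_def)

lemma poly_fun_var:
  assumes "i < n" "j < k"
  shows "poly_fun n k (\<lambda>X. X i j)"
proof (rule poly_funI[of "{()}" _ "\<lambda>_. 1" _ _ "\<lambda>_ i' j'. if i' = i \<and> j' = j then 1 else 0"])
  fix X :: "nat \<Rightarrow> nat \<Rightarrow> real"
  have "monomial_mat n k (\<lambda>i' j'. if i' = i \<and> j' = j then 1 else 0) X =
        (\<Prod>i'<n. \<Prod>j'<k. if i' = i \<and> j' = j then X i' j' else 1)"
    unfolding monomial_mat_def by (intro prod.cong) auto
  also have "\<dots> = (\<Prod>i'<n. if i' = i then X i j else 1)"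
    using assms by (intro prod.cong) (auto simp: prod.delta)
  also have "\<dots> = X i j"
    using assms by (simp add: prod.delta)
  finally show "X i j = (\<Sum>_\<in>{()}. 1 * monomial_mat n k (\<lambda>i' j'. if i' = i \<and> j' = j then 1 else 0) X)"
    by simp
qed simp

lemma poly_fun_add:
  assumes "poly_fun n k f" "poly_fun n k g"
  shows "poly_fun n k (\<lambda>X. f X + g X)"
proof -
  obtain S c where S: "finite S" "\<And>X. f X = (\<Sum>A\<in>S. c A * monomial_mat n k A X)"
    using assms(1) unfolding poly_fun_def by blast
  obtain S' c' where S': "finite S'" "\<And>X. g X = (\<Sum>A\<in>S'. c' A * monomial_mat n k A X)"
    using assms(2) unfolding poly_fun_def by blast
  show ?thesis
  proof (rule poly_funI[of "S <+> S'" _ "case_sum c c'" _ _ "case_sum id id"])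
    show "finite (S <+> S')"
      using S S' by simp
    show "f X + g X = (\<Sum>i\<in>S <+> S'. case_sum c c' i * monomial_mat n k (case_sum id id i) X)" for X
      using S S' by (simp add: sum.Plus o_def)
  qed
qed

lemma poly_fun_mult:
  assumes "poly_fun n k f" "poly_fun n k g"
  shows "poly_fun n k (\<lambda>X. f X * g X)"
proof -
  obtain S c where S: "finite S" "\<And>X. f X = (\<Sum>A\<in>S. c A * monomial_mat n k A X)"
    using assms(1) unfolding poly_fun_def by blast
  obtain S' c' where S': "finite S'" "\<And>X. g X = (\<Sum>A\<in>S'. c' A * monomial_mat n k A X)"
    using assms(2) unfolding poly_fun_def by blast
  have monomial_mult:
    "monomial_mat n k A X * monomial_mat n k B X = monomial_mat n k (\<lambda>i j. A i j + B i j) X" for A B X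
    unfolding monomial_mat_def by (simp add: prod.distrib[symmetric] power_add)
  show ?thesis
  proof (rule poly_funI[of "S \<times> S'" _ "\<lambda>x. c (fst x) * c' (snd x)" _ _ "\<lambda>x i j. fst x i j + snd x i j"])
    show "finite (S \<times> S')"
      using S S' by simp
    fix X
    have "f X * g X = (\<Sum>A\<in>S. \<Sum>B\<in>S'. (c A * monomial_mat n k A X) * (c' B * monomial_mat n k B X))"
      unfolding S S' by (rule sum_product)
    also have "\<dots> = (\<Sum>A\<in>S. \<Sum>B\<in>S'. c A * c' B * (monomial_mat n k A X * monomial_mat n k B X))"
      by (simp only: mult_ac)
    also have "\<dots> = (\<Sum>A\<in>S. \<Sum>B\<in>S'. c A * c' B * monomial_mat n k (\<lambda>i j. A i j + B i j) X)"
      by (simp only: monomial_mult)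
    also have "\<dots> = (\<Sum>x\<in>S \<times> S'. c (fst x) * c' (snd x) * monomial_mat n k (\<lambda>i j. fst x i j + snd x i j) X)"
      by (simp only: sum.cartesian_product' fst_conv snd_conv)
    finally show "f X * g X = \<dots>" .
  qed
qed

lemma poly_fun_sum:
  assumes "finite I" "\<And>i. i \<in> I \<Longrightarrow> poly_fun n k (f i)"
  shows "poly_fun n k (\<lambda>X. \<Sum>i\<in>I. f i X)"
  using assms by (induction I rule: finite_induct) (auto intro: poly_fun_const poly_fun_add)

lemma poly_fun_prod:
  assumes "finite I" "\<And>i. i \<in> I \<Longrightarrow> poly_fun n k (f i)"
  shows "poly_fun n k (\<lambda>X. \<Prod>i\<in>I. f i X)"
  using assms by (induction I rule: finite_induct) (auto intro: poly_fun_const poly_fun_mult)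

lemma poly_fun_power: "poly_fun n k f \<Longrightarrow> poly_fun n k (\<lambda>X. f X ^ m)"
  using poly_fun_prod[of "{..<m}" n k "\<lambda>_. f"] by simp

lemma poly_fun_uminus: "poly_fun n k f \<Longrightarrow> poly_fun n k (\<lambda>X. - f X)"
  using poly_fun_mult[OF poly_fun_const[of n k "-1"]] by simp

lemma monomial_mat_permute_rows:
  assumes "\<sigma> permutes {..<n}"
  shows "monomial_mat n k A (permute_rows \<sigma> X) = monomial_mat n k (\<lambda>i. A (inv \<sigma> i)) X"
  unfolding monomial_mat_def permute_rows_def
  using prod.permute[OF assms, of "\<lambda>i. \<Prod>j<k. X i j ^ A (inv \<sigma> i) j"]
  by (simp add: permutes_inverses(2)[OF assms])

lemma poly_fun_permute_rows:
  assumes "\<sigma> permutes {..<n}" "poly_fun n k f"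
  shows "poly_fun n k (\<lambda>X. f (permute_rows \<sigma> X))"
proof -
  obtain S c where S: "finite S" "\<And>X. f X = (\<Sum>A\<in>S. c A * monomial_mat n k A X)"
    using assms(2) unfolding poly_fun_def by blast
  show ?thesis
    by (rule poly_funI[OF S(1), of _ c _ _ "\<lambda>A i. A (inv \<sigma> i)"])
      (simp only: S(2) monomial_mat_permute_rows[OF assms(1)])
qed

definition sym_poly_fun :: "nat \<Rightarrow> nat \<Rightarrow> ((nat \<Rightarrow> nat \<Rightarrow> real) \<Rightarrow> real) \<Rightarrow> bool" where
  "sym_poly_fun n k s \<longleftrightarrow> poly_fun n k s \<and> row_perm_invariant {..<n} s"

lemma sym_poly_fun_const: "sym_poly_fun n k (\<lambda>X. a)"
  by (simp add: sym_poly_fun_def poly_fun_const row_perm_invariant_def)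

lemma sym_poly_fun_add:
  "sym_poly_fun n k f \<Longrightarrow> sym_poly_fun n k g \<Longrightarrow> sym_poly_fun n k (\<lambda>X. f X + g X)"
  by (simp add: sym_poly_fun_def poly_fun_add row_perm_invariant_def)

lemma sym_poly_fun_mult:
  "sym_poly_fun n k f \<Longrightarrow> sym_poly_fun n k g \<Longrightarrow> sym_poly_fun n k (\<lambda>X. f X * g X)"
  by (simp add: sym_poly_fun_def poly_fun_mult row_perm_invariant_def)

definition symmetrize :: "nat \<Rightarrow> ((nat \<Rightarrow> nat \<Rightarrow> real) \<Rightarrow> real) \<Rightarrow> (nat \<Rightarrow> nat \<Rightarrow> real) \<Rightarrow> real" where
  "symmetrize n f X = (\<Sum>\<sigma> | \<sigma> permutes {..<n}. f (permute_rows \<sigma> X))"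

lemma permute_rows_comp: "permute_rows \<sigma> (permute_rows \<rho> X) = permute_rows (\<rho> \<circ> \<sigma>) X"
  by (simp add: permute_rows_def)

lemma sym_poly_fun_symmetrize:
  assumes "poly_fun n k f"
  shows "sym_poly_fun n k (symmetrize n f)"
proof -
  have "poly_fun n k (symmetrize n f)"
    unfolding symmetrize_def[abs_def]
    by (intro poly_fun_sum poly_fun_permute_rows assms) (auto simp: finite_permutations)
  moreover have "symmetrize n f (permute_rows \<rho> X) = symmetrize n f X" if "\<rho> permutes {..<n}" for \<rho> X
    unfolding symmetrize_def permute_rows_comp
    by (rule setum_permutations_compose_left[OF that, symmetric])
  ultimately show ?thesis
    by (simp add: sym_poly_fun_def row_perm_invariant_def)
qed

definition row_monomial :: "nat \<Rightarrow> (nat \<Rightarrow> nat) \<Rightarrow> (nat \<Rightarrow> real) \<Rightarrow> real" where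
  "row_monomial k \<beta> x = (\<Prod>j<k. x j ^ \<beta> j)"

lemma row_monomial_add: "row_monomial k (\<lambda>j. \<beta> j + \<gamma> j) x = row_monomial k \<beta> x * row_monomial k \<gamma> x"
  unfolding row_monomial_def by (simp add: power_add prod.distrib)

lemma row_monomial_0: "row_monomial k (\<lambda>_. 0) x = 1"
  by (simp add: row_monomial_def)

lemma row_monomial_unit: "j < k \<Longrightarrow> row_monomial k (\<lambda>j'. if j' = j then 1 else 0) x = x j"
  unfolding row_monomial_def by (simp add: prod.delta if_distrib[of "power _"] cong: if_cong)

lemma poly_fun_row_monomial: "i < n \<Longrightarrow> poly_fun n k (\<lambda>X. row_monomial k \<beta> (X i))"
  unfolding row_monomial_def by (intro poly_fun_prod poly_fun_power poly_fun_var) auto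

lemma sym_poly_fun_power_sum: "sym_poly_fun n k (\<lambda>X. \<Sum>u<n. row_monomial k \<beta> (X u))"
proof -
  have "(\<Sum>u<n. row_monomial k \<beta> (permute_rows \<sigma> X u)) = (\<Sum>u<n. row_monomial k \<beta> (X u))"
    if "\<sigma> permutes {..<n}" for \<sigma> X
    using sum.permute[OF that, of "\<lambda>u. row_monomial k \<beta> (X u)"]
    by (simp add: permute_rows_def o_def)
  then show ?thesis
    by (auto simp: sym_poly_fun_def row_perm_invariant_def intro: poly_fun_sum poly_fun_row_monomial)
qed

section \<open>Adjoining rows to the symmetric polynomials\<close>

inductive_set sym_row_alg :: "nat \<Rightarrow> nat \<Rightarrow> nat set \<Rightarrow> ((nat \<Rightarrow> nat \<Rightarrow> real) \<Rightarrow> real) set"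
  for n k D
where
  sym_row_alg_sym: "sym_poly_fun n k s \<Longrightarrow> s \<in> sym_row_alg n k D"
| sym_row_alg_entry: "i \<in> D \<Longrightarrow> j < k \<Longrightarrow> (\<lambda>X. X i j) \<in> sym_row_alg n k D"
| sym_row_alg_add: "f \<in> sym_row_alg n k D \<Longrightarrow> g \<in> sym_row_alg n k D \<Longrightarrow> (\<lambda>X. f X + g X) \<in> sym_row_alg n k D"
| sym_row_alg_mult: "f \<in> sym_row_alg n k D \<Longrightarrow> g \<in> sym_row_alg n k D \<Longrightarrow> (\<lambda>X. f X * g X) \<in> sym_row_alg n k D"

lemma sym_row_alg_const: "(\<lambda>X. a) \<in> sym_row_alg n k D"
  by (rule sym_row_alg_sym[OF sym_poly_fun_const])

lemma sym_row_alg_sum: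
  "finite I \<Longrightarrow> (\<And>i. i \<in> I \<Longrightarrow> f i \<in> sym_row_alg n k D) \<Longrightarrow> (\<lambda>X. \<Sum>i\<in>I. f i X) \<in> sym_row_alg n k D"
  by (induction I rule: finite_induct) (auto intro: sym_row_alg_const sym_row_alg_add)

lemma sym_row_alg_sum_list:
  "(\<And>x. x \<in> set xs \<Longrightarrow> f x \<in> sym_row_alg n k D) \<Longrightarrow> (\<lambda>X. \<Sum>x\<leftarrow>xs. f x X) \<in> sym_row_alg n k D"
  by (induction xs) (auto intro: sym_row_alg_const sym_row_alg_add)

lemma sym_row_alg_prod:
  "finite I \<Longrightarrow> (\<And>i. i \<in> I \<Longrightarrow> f i \<in> sym_row_alg n k D) \<Longrightarrow> (\<lambda>X. \<Prod>i\<in>I. f i X) \<in> sym_row_alg n k D"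
  by (induction I rule: finite_induct) (auto intro: sym_row_alg_const sym_row_alg_mult)

lemma sym_row_alg_power: "f \<in> sym_row_alg n k D \<Longrightarrow> (\<lambda>X. f X ^ m) \<in> sym_row_alg n k D"
  using sym_row_alg_prod[of "{..<m}" "\<lambda>_. f"] by simp

lemma sym_row_alg_diff:
  assumes "f \<in> sym_row_alg n k D" "g \<in> sym_row_alg n k D"
  shows "(\<lambda>X. f X - g X) \<in> sym_row_alg n k D"
  using sym_row_alg_add[OF assms(1) sym_row_alg_mult[OF sym_row_alg_const[of "-1"] assms(2)]] by simp

lemma sym_row_alg_row_monomial: "i \<in> D \<Longrightarrow> (\<lambda>X. row_monomial k \<beta> (X i)) \<in> sym_row_alg n k D"
  unfolding row_monomial_def by (intro sym_row_alg_prod sym_row_alg_power sym_row_alg_entry) auto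

lemma poly_fun_in_sym_row_alg:
  assumes "poly_fun n k p"
  shows "p \<in> sym_row_alg n k {..<n}"
proof -
  obtain S c where S: "finite S" "\<And>X. p X = (\<Sum>A\<in>S. c A * monomial_mat n k A X)"
    using assms unfolding poly_fun_def by blast
  have "(\<lambda>X. \<Sum>A\<in>S. c A * monomial_mat n k A X) \<in> sym_row_alg n k {..<n}"
    unfolding monomial_mat_def
    by (intro sym_row_alg_sum sym_row_alg_mult sym_row_alg_const sym_row_alg_prod sym_row_alg_power
        sym_row_alg_entry S(1)) auto
  moreover have "p = (\<lambda>X. \<Sum>A\<in>S. c A * monomial_mat n k A X)"
    using S(2) by blast
  ultimately show ?thesis
    by simp
qed

lemma poly_fun_sym_row_alg: "f \<in> sym_row_alg n k D \<Longrightarrow> D \<subseteq> {..<n} \<Longrightarrow> poly_fun n k f"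
  by (induction rule: sym_row_alg.induct)
    (auto simp: sym_poly_fun_def intro: poly_fun_var poly_fun_add poly_fun_mult)

lemma sym_row_alg_permute_rows:
  "f \<in> sym_row_alg n k D \<Longrightarrow> \<sigma> permutes {..<n} \<Longrightarrow> (\<And>i. i \<in> D \<Longrightarrow> \<sigma> i = i) \<Longrightarrow>
    f (permute_rows \<sigma> X) = f X"
  by (induction rule: sym_row_alg.induct)
    (simp_all add: sym_poly_fun_def row_perm_invariant_def permute_rows_def)

lemma sym_poly_fun_sym_row_alg_empty: "f \<in> sym_row_alg n k {} \<Longrightarrow> sym_poly_fun n k f"
  using poly_fun_sym_row_alg[of f n k "{}"] sym_row_alg_permute_rows[of f n k "{}"]
  by (simp add: sym_poly_fun_def row_perm_invariant_def)

lemma sym_row_alg_partial_power_sum: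
  assumes "D \<subseteq> {..<n}"
  shows "(\<lambda>X. \<Sum>u\<in>{..<n} - D. row_monomial k \<beta> (X u)) \<in> sym_row_alg n k D"
proof -
  have "finite D"
    using assms finite_subset by blast
  then have "(\<lambda>X. (\<Sum>u<n. row_monomial k \<beta> (X u)) - (\<Sum>i\<in>D. row_monomial k \<beta> (X i))) \<in> sym_row_alg n k D"
    by (intro sym_row_alg_diff sym_row_alg_sym[OF sym_poly_fun_power_sum] sym_row_alg_sum
        sym_row_alg_row_monomial)
  then show ?thesis
    using assms by (simp add: sum_diff)
qed

definition row_expansions :: "nat \<Rightarrow> nat \<Rightarrow> nat \<Rightarrow> nat set \<Rightarrow> ((nat \<Rightarrow> nat \<Rightarrow> real) \<Rightarrow> real) set" where
  "row_expansions n k d D = {f. \<exists>L. (\<forall>(\<beta>, g)\<in>set L. g \<in> sym_row_alg n k D) \<and>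
     (\<forall>X. f X = (\<Sum>(\<beta>, g)\<leftarrow>L. row_monomial k \<beta> (X d) * g X))}"

lemma row_expansions_term:
  "g \<in> sym_row_alg n k D \<Longrightarrow> (\<lambda>X. row_monomial k \<beta> (X d) * g X) \<in> row_expansions n k d D"
  unfolding row_expansions_def by (intro CollectI exI[of _ "[(\<beta>, g)]"]) simp

lemma row_expansions_add:
  assumes "f \<in> row_expansions n k d D" "g \<in> row_expansions n k d D"
  shows "(\<lambda>X. f X + g X) \<in> row_expansions n k d D"
proof -
  obtain L M where "\<forall>(\<beta>, h)\<in>set L. h \<in> sym_row_alg n k D" "\<forall>X. f X = (\<Sum>(\<beta>, h)\<leftarrow>L. row_monomial k \<beta> (X d) * h X)"
    and "\<forall>(\<beta>, h)\<in>set M. h \<in> sym_row_alg n k D" "\<forall>X. g X = (\<Sum>(\<beta>, h)\<leftarrow>M. row_monomial k \<beta> (X d) * h X)"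
    using assms unfolding row_expansions_def by blast
  then show ?thesis
    unfolding row_expansions_def by (intro CollectI exI[of _ "L @ M"]) auto
qed

lemma row_expansions_sum_list:
  "(\<And>x. x \<in> set xs \<Longrightarrow> F x \<in> row_expansions n k d D) \<Longrightarrow> (\<lambda>X. \<Sum>x\<leftarrow>xs. F x X) \<in> row_expansions n k d D"
proof (induction xs)
  case Nil
  show ?case
    unfolding row_expansions_def by (intro CollectI exI[of _ "[]"]) simp
next
  case (Cons x xs)
  then show ?case
    using row_expansions_add[of "F x" n k d D "\<lambda>X. \<Sum>x\<leftarrow>xs. F x X"] by simp
qed

lemma row_expansions_mult_term:
  assumes "f \<in> row_expansions n k d D" "g \<in> sym_row_alg n k D"
  shows "(\<lambda>X. row_monomial k \<beta> (X d) * g X * f X) \<in> row_expansions n k d D"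
proof -
  obtain L where L: "\<forall>(\<gamma>, h)\<in>set L. h \<in> sym_row_alg n k D"
    "\<forall>X. f X = (\<Sum>(\<gamma>, h)\<leftarrow>L. row_monomial k \<gamma> (X d) * h X)"
    using assms(1) unfolding row_expansions_def by blast
  let ?L = "map (\<lambda>(\<gamma>, h). (\<lambda>j. \<beta> j + \<gamma> j, \<lambda>X. g X * h X)) L"
  have "\<forall>(\<gamma>, h)\<in>set ?L. h \<in> sym_row_alg n k D"
    using L(1) assms(2) by (auto intro: sym_row_alg_mult)
  moreover have "row_monomial k \<beta> (X d) * g X * f X = (\<Sum>(\<gamma>, h)\<leftarrow>?L. row_monomial k \<gamma> (X d) * h X)" for X
    unfolding L(2)[rule_format] sum_list_const_mult[symmetric]
    by (simp add: o_def case_prod_beta row_monomial_add mult_ac)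
  ultimately show ?thesis
    unfolding row_expansions_def by blast
qed

lemma row_expansions_mult:
  assumes "f \<in> row_expansions n k d D" "g \<in> row_expansions n k d D"
  shows "(\<lambda>X. f X * g X) \<in> row_expansions n k d D"
proof -
  obtain L where L: "\<forall>(\<beta>, h)\<in>set L. h \<in> sym_row_alg n k D"
    "\<forall>X. f X = (\<Sum>(\<beta>, h)\<leftarrow>L. row_monomial k \<beta> (X d) * h X)"
    using assms(1) unfolding row_expansions_def by blast
  have "(\<lambda>X. \<Sum>(\<beta>, h)\<leftarrow>L. row_monomial k \<beta> (X d) * h X * g X) \<in> row_expansions n k d D"
    using L(1) by (intro row_expansions_sum_list) (auto intro: row_expansions_mult_term assms(2))
  moreover have "f X * g X = (\<Sum>(\<beta>, h)\<leftarrow>L. row_monomial k \<beta> (X d) * h X * g X)" for X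
    unfolding L(2)[rule_format] sum_list_mult_const[symmetric] by (simp add: o_def split_def)
  ultimately show ?thesis
    by simp
qed

lemma sym_row_alg_insert_in_row_expansions:
  "f \<in> sym_row_alg n k (insert d D) \<Longrightarrow> f \<in> row_expansions n k d D"
proof (induction rule: sym_row_alg.induct)
  case (sym_row_alg_sym s)
  then have "s \<in> sym_row_alg n k D"
    by (rule sym_row_alg.sym_row_alg_sym)
  from row_expansions_term[OF this, where \<beta> = "\<lambda>_. 0" and d = d] show ?case
    by (simp add: row_monomial_0)
next
  case (sym_row_alg_entry i j)
  show ?case
  proof (cases "i = d")
    case True
    from row_expansions_term[OF sym_row_alg_const[of 1 n k D], where \<beta> = "\<lambda>j'. if j' = j then 1 else 0" and d = d]
    show ?thesis
      using True sym_row_alg_entry by (simp add: row_monomial_unit)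
  next
    case False
    then have "(\<lambda>X. X i j) \<in> sym_row_alg n k D"
      using sym_row_alg_entry by (auto intro: sym_row_alg.sym_row_alg_entry)
    from row_expansions_term[OF this, where \<beta> = "\<lambda>_. 0" and d = d] show ?thesis
      by (simp add: row_monomial_0)
  qed
next
  case (sym_row_alg_add f g)
  from sym_row_alg_add.IH show ?case
    by (rule row_expansions_add)
next
  case (sym_row_alg_mult f g)
  from sym_row_alg_mult.IH show ?case
    by (rule row_expansions_mult)
qed

lemma row_expansion_permute_transpose:
  assumes "\<forall>(\<beta>, g)\<in>set L. g \<in> sym_row_alg n k D" "d < n" "u < n" "d \<notin> D" "u \<notin> D"
  shows "(\<Sum>(\<beta>, g)\<leftarrow>L. row_monomial k \<beta> (permute_rows (transpose d u) X d) * g (permute_rows (transpose d u) X))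
    = (\<Sum>(\<beta>, g)\<leftarrow>L. row_monomial k \<beta> (X u) * g X)"
proof -
  have perm: "transpose d u permutes {..<n}"
    using assms(2,3) by (intro permutes_swap_id) auto
  have "g (permute_rows (transpose d u) X) = g X" if "(\<beta>, g) \<in> set L" for \<beta> g
    using assms(1,4,5) that
    by (intro sym_row_alg_permute_rows[OF _ perm] transpose_apply_other) auto
  then show ?thesis
    by (intro arg_cong[where f = sum_list] map_cong) (auto simp: permute_rows_def)
qed

lemma sum_sum_list_swap: "(\<Sum>u\<in>U. \<Sum>x\<leftarrow>xs. F u x) = (\<Sum>x\<leftarrow>xs. \<Sum>u\<in>U. F u x :: 'a :: comm_monoid_add)"
  by (induction xs) (simp_all add: sum.distrib)

lemma sym_row_alg_remove_row:
  assumes "d < n" "d \<notin> D" "D \<subseteq> {..<n}" "f \<in> sym_row_alg n k (insert d D)"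
    and inv: "\<And>u X. u \<in> {..<n} - D \<Longrightarrow> f (permute_rows (transpose d u) X) = f X"
  shows "f \<in> sym_row_alg n k D"
proof -
  obtain L where L: "\<forall>(\<beta>, g)\<in>set L. g \<in> sym_row_alg n k D"
    "\<forall>X. f X = (\<Sum>(\<beta>, g)\<leftarrow>L. row_monomial k \<beta> (X d) * g X)"
    using sym_row_alg_insert_in_row_expansions[OF assms(4)] unfolding row_expansions_def by blast
  define U where "U = {..<n} - D"
  have "d \<in> U" "finite U"
    using assms(1,2) by (auto simp: U_def)
  then have "card U > 0"
    by (auto simp: card_gt_0_iff)
  have moved: "f X = (\<Sum>(\<beta>, g)\<leftarrow>L. row_monomial k \<beta> (X u) * g X)" if "u \<in> U" for u X
    using inv[of u X] L row_expansion_permute_transpose[OF L(1) assms(1) _ assms(2)] that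
    by (simp add: U_def)
  have "f X = (1 / card U) * (\<Sum>(\<beta>, g)\<leftarrow>L. g X * (\<Sum>u\<in>U. row_monomial k \<beta> (X u)))" for X
  proof -
    have "card U * f X = (\<Sum>u\<in>U. f X)"
      by simp
    also have "\<dots> = (\<Sum>u\<in>U. \<Sum>(\<beta>, g)\<leftarrow>L. row_monomial k \<beta> (X u) * g X)"
      by (intro sum.cong refl moved)
    also have "\<dots> = (\<Sum>(\<beta>, g)\<leftarrow>L. g X * (\<Sum>u\<in>U. row_monomial k \<beta> (X u)))"
      by (simp add: sum_sum_list_swap split_def sum_distrib_left mult.commute)
    finally show ?thesis
      using \<open>card U > 0\<close> by (simp add: field_simps)
  qed
  moreover have "(\<lambda>X. (1 / card U) * (\<Sum>(\<beta>, g)\<leftarrow>L. g X * (\<Sum>u\<in>U. row_monomial k \<beta> (X u))))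
      \<in> sym_row_alg n k D"
    using L(1) sym_row_alg_partial_power_sum[OF assms(3)] unfolding U_def
    by (intro sym_row_alg_mult[OF sym_row_alg_const] sym_row_alg_sum_list) (fastforce intro: sym_row_alg_mult)
  ultimately show ?thesis
    by (metis (no_types, lifting) ext)
qed

lemma sym_row_alg_descend:
  assumes "f \<in> sym_row_alg n k {..<n}" "row_perm_invariant {m..<n} f" "m \<le> n"
  shows "f \<in> sym_row_alg n k {..<m}"
  using assms(3)
proof (induction rule: inc_induct)
  case base
  show ?case
    using assms(1) .
next
  case (step d)
  show ?case
  proof (rule sym_row_alg_remove_row)
    show "d < n" "d \<notin> {..<d}" "{..<d} \<subseteq> {..<n}"
      using step.hyps by auto
    show "f \<in> sym_row_alg n k (insert d {..<d})"
      using step.IH by (simp add: lessThan_Suc)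
    fix u X
    assume "u \<in> {..<n} - {..<d}"
    then have "transpose d u permutes {m..<n}"
      using step.hyps by (intro permutes_swap_id) auto
    then show "f (permute_rows (transpose d u) X) = f X"
      using assms(2) by (simp add: row_perm_invariant_def)
  qed
qed

section \<open>Lowering the degree in the first row\<close>

definition low_degree_exponents :: "nat \<Rightarrow> nat \<Rightarrow> (nat \<Rightarrow> nat) set" where
  "low_degree_exponents n k = {\<alpha>. (\<forall>j\<ge>k. \<alpha> j = 0) \<and> (\<Sum>j<k. \<alpha> j) \<le> n}"

lemma finite_low_degree_exponents: "finite (low_degree_exponents n k)"
proof -
  let ?F = "{\<alpha>. \<forall>j. (j \<in> {..<k} \<longrightarrow> \<alpha> j \<in> {..n}) \<and> (j \<notin> {..<k} \<longrightarrow> \<alpha> j = 0)}"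
  have "\<alpha> j \<le> n" if "\<alpha> \<in> low_degree_exponents n k" "j < k" for \<alpha> j
    using that member_le_sum[of j "{..<k}" \<alpha>] by (auto simp: low_degree_exponents_def)
  then have "low_degree_exponents n k \<subseteq> ?F"
    by (auto simp: low_degree_exponents_def)
  moreover have "finite ?F"
    by (rule finite_set_of_finite_funs) simp_all
  ultimately show ?thesis
    by (rule finite_subset)
qed

definition low_degree_span :: "nat \<Rightarrow> nat \<Rightarrow> ((nat \<Rightarrow> nat \<Rightarrow> real) \<Rightarrow> real) set" where
  "low_degree_span n k = {f. \<exists>q. (\<forall>\<alpha>. sym_poly_fun n k (q \<alpha>)) \<and>
     (\<forall>X. f X = (\<Sum>\<alpha>\<in>low_degree_exponents n k. row_monomial k \<alpha> (X 0) * q \<alpha> X))}"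

lemma low_degree_span_zero: "(\<lambda>X. 0) \<in> low_degree_span n k"
  unfolding low_degree_span_def by (intro CollectI exI[of _ "\<lambda>_ _. 0"]) (simp add: sym_poly_fun_const)

lemma low_degree_span_add:
  assumes "f \<in> low_degree_span n k" "g \<in> low_degree_span n k"
  shows "(\<lambda>X. f X + g X) \<in> low_degree_span n k"
proof -
  obtain q r where "\<forall>\<alpha>. sym_poly_fun n k (q \<alpha>)" "\<forall>\<alpha>. sym_poly_fun n k (r \<alpha>)"
    "\<forall>X. f X = (\<Sum>\<alpha>\<in>low_degree_exponents n k. row_monomial k \<alpha> (X 0) * q \<alpha> X)"
    "\<forall>X. g X = (\<Sum>\<alpha>\<in>low_degree_exponents n k. row_monomial k \<alpha> (X 0) * r \<alpha> X)"
    using assms unfolding low_degree_span_def by blast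
  then show ?thesis
    unfolding low_degree_span_def
    by (intro CollectI exI[of _ "\<lambda>\<alpha> X. q \<alpha> X + r \<alpha> X"]) (simp add: sym_poly_fun_add distrib_left sum.distrib)
qed

lemma low_degree_span_scale:
  assumes "f \<in> low_degree_span n k" "sym_poly_fun n k s"
  shows "(\<lambda>X. s X * f X) \<in> low_degree_span n k"
proof -
  obtain q where "\<forall>\<alpha>. sym_poly_fun n k (q \<alpha>)"
    "\<forall>X. f X = (\<Sum>\<alpha>\<in>low_degree_exponents n k. row_monomial k \<alpha> (X 0) * q \<alpha> X)"
    using assms(1) unfolding low_degree_span_def by blast
  then show ?thesis
    unfolding low_degree_span_def using assms(2)
    by (intro CollectI exI[of _ "\<lambda>\<alpha> X. s X * q \<alpha> X"]) (simp add: sym_poly_fun_mult sum_distrib_left mult_ac)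
qed

lemma low_degree_span_sum:
  "finite I \<Longrightarrow> (\<And>i. i \<in> I \<Longrightarrow> f i \<in> low_degree_span n k) \<Longrightarrow> (\<lambda>X. \<Sum>i\<in>I. f i X) \<in> low_degree_span n k"
  by (induction I rule: finite_induct) (auto intro: low_degree_span_zero low_degree_span_add)

lemma low_degree_span_sum_list:
  "(\<And>x. x \<in> set xs \<Longrightarrow> f x \<in> low_degree_span n k) \<Longrightarrow> (\<lambda>X. \<Sum>x\<leftarrow>xs. f x X) \<in> low_degree_span n k"
  by (induction xs) (auto intro: low_degree_span_zero low_degree_span_add)

lemma low_degree_span_row_monomial:
  assumes "\<alpha> \<in> low_degree_exponents n k"
  shows "(\<lambda>X. row_monomial k \<alpha> (X 0)) \<in> low_degree_span n k"
  unfolding low_degree_span_def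
proof (intro CollectI exI[of _ "\<lambda>\<beta> X. if \<beta> = \<alpha> then 1 else 0"] conjI allI)
  show "sym_poly_fun n k (\<lambda>X. if \<beta> = \<alpha> then 1 else 0)" for \<beta>
    by (rule sym_poly_fun_const)
  show "row_monomial k \<alpha> (X 0) =
      (\<Sum>\<beta>\<in>low_degree_exponents n k. row_monomial k \<beta> (X 0) * (if \<beta> = \<alpha> then 1 else 0))" for X
    using assms finite_low_degree_exponents by (simp add: if_distrib[of "(*) _"] sum.delta' cong: if_cong)
qed

lemma symmetrize_first_row_identity:
  assumes "bij_betw e B {..<n}" "n \<ge> 1"
  shows "fact n * (\<Prod>t\<in>B. X 0 (c t)) =
    - (\<Sum>S\<in>Pow B - {{}}. symmetrize n (\<lambda>Y. \<Prod>t\<in>S. - Y (e t) (c t)) X * (\<Prod>t\<in>B - S. X 0 (c t)))"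
proof -
  let ?P = "{\<tau>. \<tau> permutes {..<n}}"
  have "finite B"
    using assms(1) bij_betw_finite by blast
  have vanish: "(\<Prod>t\<in>B. - X (\<tau> (e t)) (c t) + X 0 (c t)) = 0" if "\<tau> \<in> ?P" for \<tau>
  proof -
    have "inv \<tau> 0 \<in> {..<n}"
      using that assms(2) permutes_in_image[OF permutes_inv, of \<tau> "{..<n}" 0] by auto
    then obtain t where "t \<in> B" "e t = inv \<tau> 0"
      using assms(1) by (metis bij_betw_imp_surj_on imageE)
    then have "\<tau> (e t) = 0"
      using that permutes_inverses(1) by fastforce
    then show ?thesis
      using \<open>t \<in> B\<close> \<open>finite B\<close> by (intro prod_zero bexI[of _ t]) simp_all
  qed
  have "0 = (\<Sum>\<tau>\<in>?P. \<Prod>t\<in>B. - X (\<tau> (e t)) (c t) + X 0 (c t))"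
    using vanish by simp
  also have "\<dots> = (\<Sum>\<tau>\<in>?P. \<Sum>S\<in>Pow B. (\<Prod>t\<in>S. - X (\<tau> (e t)) (c t)) * (\<Prod>t\<in>B - S. X 0 (c t)))"
    using \<open>finite B\<close> by (intro sum.cong refl prod_add)
  also have "\<dots> = (\<Sum>S\<in>Pow B. symmetrize n (\<lambda>Y. \<Prod>t\<in>S. - Y (e t) (c t)) X * (\<Prod>t\<in>B - S. X 0 (c t)))"
    by (subst sum.swap) (simp add: symmetrize_def permute_rows_def sum_distrib_right)
  also have "\<dots> = fact n * (\<Prod>t\<in>B. X 0 (c t)) +
      (\<Sum>S\<in>Pow B - {{}}. symmetrize n (\<lambda>Y. \<Prod>t\<in>S. - Y (e t) (c t)) X * (\<Prod>t\<in>B - S. X 0 (c t)))"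
    using \<open>finite B\<close> by (subst sum.remove[of _ "{}"]) (auto simp: symmetrize_def card_permutations)
  finally show ?thesis
    by linarith
qed

lemma prod_eq_row_monomial_fibre_card:
  assumes "finite A" "c ` A \<subseteq> {..<k}"
  shows "(\<Prod>t\<in>A. x (c t)) = row_monomial k (\<lambda>j. card {t\<in>A. c t = j}) x"
proof -
  have "(\<Prod>t\<in>A. x (c t)) = (\<Prod>j<k. \<Prod>t\<in>{t\<in>A. c t = j}. x (c t))"
    by (rule prod.group[OF assms(1) finite_lessThan assms(2), symmetric])
  also have "\<dots> = (\<Prod>j<k. \<Prod>t\<in>{t\<in>A. c t = j}. x j)"
    by (intro prod.cong refl) auto
  finally show ?thesis
    by (simp add: row_monomial_def)
qed

lemma card_eq_sum_fibre_card:
  assumes "finite A" "c ` A \<subseteq> {..<k::nat}"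
  shows "card A = (\<Sum>j<k. card {t\<in>A. c t = j})"
  using sum.group[OF assms(1) finite_lessThan assms(2), of "\<lambda>_. 1::nat"] by simp

lemma prod_first_row_in_low_degree_span_of_card_le:
  assumes "finite A" "c ` A \<subseteq> {..<k}" "card A \<le> n"
  shows "(\<lambda>X. \<Prod>t\<in>A. X 0 (c t)) \<in> low_degree_span n k"
proof -
  have "card {t\<in>A. c t = j} = 0" if "j \<ge> k" for j
  proof -
    have "{t\<in>A. c t = j} = {}"
      using that assms(2) by fastforce
    then show ?thesis
      by (simp only: card.empty)
  qed
  then have "(\<lambda>j. card {t\<in>A. c t = j}) \<in> low_degree_exponents n k"
    using assms(3) card_eq_sum_fibre_card[OF assms(1,2)] by (simp add: low_degree_exponents_def)
  then show ?thesis
    using low_degree_span_row_monomial by (simp add: prod_eq_row_monomial_fibre_card[OF assms(1,2)])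
qed

lemma prod_first_row_reduction:
  assumes "bij_betw e B {..<n}" "n \<ge> 1" "B \<subseteq> A" "finite A"
  shows "(\<lambda>X. \<Prod>t\<in>A. X 0 (c t)) = (\<lambda>X. (-1 / fact n) *
    (\<Sum>S\<in>Pow B - {{}}. symmetrize n (\<lambda>Y. \<Prod>t\<in>S. - Y (e t) (c t)) X * (\<Prod>t\<in>A - S. X 0 (c t))))"
proof
  fix X :: "nat \<Rightarrow> nat \<Rightarrow> real"
  have split: "(\<Prod>t\<in>B - S. X 0 (c t)) * (\<Prod>t\<in>A - B. X 0 (c t)) = (\<Prod>t\<in>A - S. X 0 (c t))"
    if "S \<subseteq> B" for S
  proof -
    have "(\<Prod>t\<in>A - S. X 0 (c t)) = (\<Prod>t\<in>A - S - (B - S). X 0 (c t)) * (\<Prod>t\<in>B - S. X 0 (c t))"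
      using assms(3,4) by (intro prod.subset_diff) auto
    moreover have "A - S - (B - S) = A - B"
      using that by blast
    ultimately show ?thesis
      by (simp add: mult.commute)
  qed
  have "fact n * (\<Prod>t\<in>A. X 0 (c t)) = fact n * (\<Prod>t\<in>B. X 0 (c t)) * (\<Prod>t\<in>A - B. X 0 (c t))"
    using prod.subset_diff[OF assms(3,4)] by (simp add: mult_ac)
  also have "\<dots> = - (\<Sum>S\<in>Pow B - {{}}. symmetrize n (\<lambda>Y. \<Prod>t\<in>S. - Y (e t) (c t)) X * (\<Prod>t\<in>A - S. X 0 (c t)))"
    unfolding symmetrize_first_row_identity[OF assms(1,2)]
    by (auto simp: sum_distrib_right split mult.assoc intro!: sum.cong)
  finally show "(\<Prod>t\<in>A. X 0 (c t)) = (-1 / fact n) *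
    (\<Sum>S\<in>Pow B - {{}}. symmetrize n (\<lambda>Y. \<Prod>t\<in>S. - Y (e t) (c t)) X * (\<Prod>t\<in>A - S. X 0 (c t)))"
    by (simp add: field_simps)
qed

lemma sym_poly_fun_symmetrize_prod_entries:
  assumes "finite S" "\<And>t. t \<in> S \<Longrightarrow> e t < n" "\<And>t. t \<in> S \<Longrightarrow> c t < k"
  shows "sym_poly_fun n k (symmetrize n (\<lambda>Y. \<Prod>t\<in>S. - Y (e t) (c t)))"
  using assms by (intro sym_poly_fun_symmetrize poly_fun_prod poly_fun_uminus poly_fun_var)

lemma prod_first_row_in_low_degree_span:
  assumes "n \<ge> 1" "finite A" "c ` A \<subseteq> {..<k}"
  shows "(\<lambda>X. \<Prod>t\<in>A. X 0 (c t)) \<in> low_degree_span n k"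
  using assms(2,3)
proof (induction "card A" arbitrary: A rule: less_induct)
  case less
  show ?case
  proof (cases "card A \<le> n")
    case True
    with less.prems show ?thesis
      by (intro prod_first_row_in_low_degree_span_of_card_le)
  next
    case False
    then obtain B where B: "B \<subseteq> A" "card B = n"
      by (metis nat_le_linear obtain_subset_with_card_n)
    have "finite B"
      using B(1) less.prems(1) by (rule finite_subset)
    then obtain e where e: "bij_betw e B {..<n}"
      using ex_bij_betw_finite_nat[of B] B(2) by (auto simp: atLeast0LessThan)
    show ?thesis
      unfolding prod_first_row_reduction[OF e assms(1) B(1) less.prems(1)]
    proof (intro low_degree_span_scale[OF _ sym_poly_fun_const] low_degree_span_sum low_degree_span_scale)
      fix S
      assume S: "S \<in> Pow B - {{}}"
      then have "card (A - S) < card A"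
        using B(1) less.prems(1) by (intro psubset_card_mono) auto
      then show "(\<lambda>X. \<Prod>t\<in>A - S. X 0 (c t)) \<in> low_degree_span n k"
        using less by auto
      show "sym_poly_fun n k (symmetrize n (\<lambda>Y. \<Prod>t\<in>S. - Y (e t) (c t)))"
        using S \<open>finite B\<close> B(1) less.prems(2) bij_betwE[OF e]
        by (intro sym_poly_fun_symmetrize_prod_entries) (auto simp: image_subset_iff intro: finite_subset)
    qed (simp add: \<open>finite B\<close>)
  qed
qed

lemma row_monomial_first_row_in_low_degree_span:
  assumes "n \<ge> 1"
  shows "(\<lambda>X. row_monomial k \<beta> (X 0)) \<in> low_degree_span n k"
proof -
  have "row_monomial k \<beta> x = (\<Prod>t\<in>Sigma {..<k} (\<lambda>j. {..<\<beta> j}). x (fst t))" for x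
  proof -
    have "(\<Prod>j<k. \<Prod>l<\<beta> j. x j) = (\<Prod>(j, l)\<in>Sigma {..<k} (\<lambda>j. {..<\<beta> j}). x j)"
      by (rule prod.Sigma) auto
    then show ?thesis
      by (simp add: row_monomial_def split_def)
  qed
  moreover have "(\<lambda>X. \<Prod>t\<in>Sigma {..<k} (\<lambda>j. {..<\<beta> j}). X 0 (fst t)) \<in> low_degree_span n k"
    by (rule prod_first_row_in_low_degree_span[OF assms]) auto
  ultimately show ?thesis
    by (simp only:)
qed

lemma row_expansions_first_row_in_low_degree_span:
  assumes "n \<ge> 1" "f \<in> row_expansions n k 0 {}"
  shows "f \<in> low_degree_span n k"
proof -
  obtain L where L: "\<forall>(\<beta>, g)\<in>set L. g \<in> sym_row_alg n k {}"
    "\<forall>X. f X = (\<Sum>(\<beta>, g)\<leftarrow>L. row_monomial k \<beta> (X 0) * g X)"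
    using assms(2) unfolding row_expansions_def by blast
  have "(\<lambda>X. \<Sum>(\<beta>, g)\<leftarrow>L. g X * row_monomial k \<beta> (X 0)) \<in> low_degree_span n k"
    using L(1) by (intro low_degree_span_sum_list)
      (auto intro!: low_degree_span_scale row_monomial_first_row_in_low_degree_span[OF assms(1)]
        sym_poly_fun_sym_row_alg_empty)
  moreover have "f = (\<lambda>X. \<Sum>(\<beta>, g)\<leftarrow>L. g X * row_monomial k \<beta> (X 0))"
    using L(2) by (simp add: split_def mult.commute fun_eq_iff)
  ultimately show ?thesis
    by simp
qed

theorem lemma2:
  fixes n k :: nat and p :: "(nat \<Rightarrow> nat \<Rightarrow> real) \<Rightarrow> real"
  assumes "n \<ge> 1"
    and "poly_fun n k p"
    and "row_perm_invariant {1..<n} p"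
  shows "\<exists>q :: (nat \<Rightarrow> nat) \<Rightarrow> (nat \<Rightarrow> nat \<Rightarrow> real) \<Rightarrow> real.
           (\<forall>\<alpha>. poly_fun n k (q \<alpha>) \<and> row_perm_invariant {..<n} (q \<alpha>)) \<and>
           (\<forall>X. p X = (\<Sum>\<alpha>\<in>{\<alpha>. (\<forall>j\<ge>k. \<alpha> j = 0) \<and> (\<Sum>j<k. \<alpha> j) \<le> n}.
                          (\<Prod>j<k. X 0 j ^ \<alpha> j) * q \<alpha> X))"
proof -
  have "p \<in> sym_row_alg n k {..<1}"
    using sym_row_alg_descend[OF poly_fun_in_sym_row_alg[OF assms(2)] assms(3,1)] .
  moreover have "{..<1::nat} = insert 0 {}"
    by auto
  ultimately have "p \<in> row_expansions n k 0 {}"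
    using sym_row_alg_insert_in_row_expansions by simp
  then have "p \<in> low_degree_span n k"
    by (rule row_expansions_first_row_in_low_degree_span[OF assms(1)])
  then obtain q where q: "\<forall>\<alpha>. sym_poly_fun n k (q \<alpha>)"
    "\<forall>X. p X = (\<Sum>\<alpha>\<in>low_degree_exponents n k. row_monomial k \<alpha> (X 0) * q \<alpha> X)"
    unfolding low_degree_span_def by blast
  show ?thesis
  proof (intro exI[of _ q] conjI allI)
    show "poly_fun n k (q \<alpha>)" "row_perm_invariant {..<n} (q \<alpha>)" for \<alpha>
      using q(1) by (simp_all add: sym_poly_fun_def)
    show "p X = (\<Sum>\<alpha>\<in>{\<alpha>. (\<forall>j\<ge>k. \<alpha> j = 0) \<and> (\<Sum>j<k. \<alpha> j) \<le> n}. (\<Prod>j<k. X 0 j ^ \<alpha> j) * q \<alpha> X)" for X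
      using q(2) by (simp add: low_degree_exponents_def row_monomial_def)
  qed
qed

end
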